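(* There exists a probability distribution $\gamma$ on $\mathbb{Z}_7$ such that $\hat{\gamma}(3)=\hat{\gamma}(-3)$ and the random walk on $\mathbb{Z}_7$ with step distribution $\gamma$ is reconstructive.
   Context: $\hat{\gamma}(x)=\sum_{k\in\mathbb{Z}_7}\omega_7^{kx}\gamma(k)$ with $\omega_7=e^{-2\pi i/7}$. The random walk has $v(1)$ uniform on $\mathbb{Z}_7$ and independent steps with $\mathbb{P}(v(t+1)-v(t)=k)=\gamma(k)$. It is reconstructive if, for any two labelings $f_1,f_2:\mathbb{Z}_7\to\{0,1\}$, the distributions of $\{f_1(v(t))\}_{t\ge1}$ and $\{f_2(v(t))\}_{t\ge1}$ coincide only if there is $\ell$ with $f_1(k)=f_2(k+\ell)$ for all $k$. *)

theory Defs
  imports Complex_Main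
begin

text \<open>Z_7 is represented by {0..<7} :: nat set; a step distribution is gamma :: nat => real
  (only its values on {0..<7} matter).\<close>

definition is_distribution_Z7 :: "(nat \<Rightarrow> real) \<Rightarrow> bool" where
  "is_distribution_Z7 g \<longleftrightarrow> (\<forall>k<7. g k \<ge> 0) \<and> (\<Sum>k<7. g k) = 1"

definition omega7 :: complex where
  "omega7 = exp (- 2 * of_real pi * \<i> / 7)"

definition fhat :: "(nat \<Rightarrow> real) \<Rightarrow> int \<Rightarrow> complex" where
  "fhat g x = (\<Sum>k<7. omega7 powi (int k * x) * of_real (g k))"

text \<open>Probability that v(1),...,v(n) equals the list xs (all entries in Z_7):
  v(1) uniform, increments i.i.d. with law g.\<close>
definition path_prob :: "(nat \<Rightarrow> real) \<Rightarrow> nat list \<Rightarrow> real" where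
  "path_prob g xs = (1/7) * (\<Prod>i<length xs - 1. g ((xs ! (i+1) + 7 - xs ! i) mod 7))"

definition word_prob :: "(nat \<Rightarrow> real) \<Rightarrow> (nat \<Rightarrow> bool) \<Rightarrow> bool list \<Rightarrow> real" where
  "word_prob g f w =
     (\<Sum>xs\<in>{xs. length xs = length w \<and> set xs \<subseteq> {..<7} \<and> map f xs = w}. path_prob g xs)"

text \<open>Reconstructive: equal laws of the label processes (i.e. equal finite-dimensional
  distributions) imply the labelings agree up to a cyclic shift.\<close>
definition reconstructive :: "(nat \<Rightarrow> real) \<Rightarrow> bool" where
  "reconstructive g \<longleftrightarrow>
     (\<forall>f1 f2 :: nat \<Rightarrow> bool.
        (\<forall>w. word_prob g f1 w = word_prob g f2 w) \<longrightarrow>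
        (\<exists>l<7. \<forall>k<7. f1 k = f2 ((k + l) mod 7)))"

end

theory Submission imports Defs begin

text \<open>Take \<gamma> supported on the steps +1 and +2, with \<gamma>(1) sin(\<pi>/7) = \<gamma>(2) sin(2\<pi>/7); this is
  exactly the condition that hat \<gamma>(3) is real, i.e. equal to hat \<gamma>(-3). For such a walk the
  probability of a label word of length n+1 is \<gamma>(2)^n/7 times a polynomial with natural coefficients
  in r = \<gamma>(1)/\<gamma>(2), computable from the labelling. If the coefficients for one labelling dominate
  those for another, the two word probabilities differ for every r > 0. A finite computation shows
  that every labelling is a rotation of one of the 20 binary necklaces of length 7 and has its
  necklace's coefficients on four test words, and that any two distinct necklaces are separated
  by domination on one of these words.\<close>

section \<open>Polynomials with natural coefficients\<close>

text \<open>Coefficient lists start with the constant term; missing coefficients count as 0.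
  coeffs_gt p q says that p dominates q coefficientwise, strictly in at least one coefficient.\<close>

fun coeffs_plus :: "nat list \<Rightarrow> nat list \<Rightarrow> nat list" where
  "coeffs_plus [] q = q"
| "coeffs_plus p [] = p"
| "coeffs_plus (x # p) (y # q) = (x + y) # coeffs_plus p q"

fun coeffs_eval :: "nat list \<Rightarrow> real \<Rightarrow> real" where
  "coeffs_eval [] r = 0"
| "coeffs_eval (c # p) r = of_nat c + r * coeffs_eval p r"

fun coeffs_ge :: "nat list \<Rightarrow> nat list \<Rightarrow> bool" where
  "coeffs_ge [] [] = True"
| "coeffs_ge [] (y # q) = (y = 0 \<and> coeffs_ge [] q)"
| "coeffs_ge (x # p) [] = True"
| "coeffs_ge (x # p) (y # q) = (y \<le> x \<and> coeffs_ge p q)"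

fun coeffs_gt :: "nat list \<Rightarrow> nat list \<Rightarrow> bool" where
  "coeffs_gt [] q = False"
| "coeffs_gt (x # p) [] = (0 < x \<or> coeffs_gt p [])"
| "coeffs_gt (x # p) (y # q) = ((y < x \<and> coeffs_ge p q) \<or> (y = x \<and> coeffs_gt p q))"

lemma coeffs_eval_plus: "coeffs_eval (coeffs_plus p q) r = coeffs_eval p r + coeffs_eval q r"
  by (induction p q rule: coeffs_plus.induct) (simp_all add: algebra_simps)

lemma coeffs_eval_sum_list:
  "coeffs_eval (foldr (\<lambda>x acc. coeffs_plus (h x) acc) xs []) r = (\<Sum>x\<leftarrow>xs. coeffs_eval (h x) r)"
  by (induction xs) (simp_all add: coeffs_eval_plus)

lemma coeffs_eval_nonneg: "r \<ge> 0 \<Longrightarrow> coeffs_eval p r \<ge> 0"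
  by (induction p) auto

lemma coeffs_eval_mono: "coeffs_ge p q \<Longrightarrow> r \<ge> 0 \<Longrightarrow> coeffs_eval q r \<le> coeffs_eval p r"
proof (induction p q rule: coeffs_ge.induct)
  case (2 y q)
  then have "r * coeffs_eval q r \<le> 0" by (simp add: mult_nonneg_nonpos)
  with 2 show ?case by simp
next
  case (3 x p)
  then show ?case using coeffs_eval_nonneg[of r "x # p"] by simp
next
  case (4 x p y q)
  then have "r * coeffs_eval q r \<le> r * coeffs_eval p r" by (auto intro: mult_left_mono)
  with 4 show ?case by simp
qed simp

lemma coeffs_eval_strict_mono: "coeffs_gt p q \<Longrightarrow> r > 0 \<Longrightarrow> coeffs_eval q r < coeffs_eval p r"
proof (induction p q rule: coeffs_gt.induct)
  case (2 x p)
  have "coeffs_eval p r \<ge> 0" using coeffs_eval_nonneg 2 by simp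
  moreover have "0 < x \<or> coeffs_eval p r > 0" using 2 by auto
  ultimately show ?case using \<open>r > 0\<close> by (auto intro: add_pos_nonneg add_nonneg_pos)
next
  case (3 x p y q)
  show ?case
  proof (cases "y < x \<and> coeffs_ge p q")
    case True
    then have "r * coeffs_eval q r \<le> r * coeffs_eval p r"
      using 3 coeffs_eval_mono[of p q r] by (auto intro: mult_left_mono)
    with True show ?thesis by simp
  next
    case False
    with 3 have "y = x" "coeffs_eval q r < coeffs_eval p r" by auto
    then show ?thesis using 3 by simp
  qed
qed simp

section \<open>Word probabilities by the forward recursion\<close>

definition Z7_paths :: "nat \<Rightarrow> nat list set" where
  "Z7_paths n = {xs. set xs \<subseteq> {..<7} \<and> length xs = n}"

lemma finite_Z7_paths: "finite (Z7_paths n)"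
  unfolding Z7_paths_def by (rule finite_lists_length_eq) simp

lemma Z7_paths_0: "Z7_paths 0 = {[]}"
  unfolding Z7_paths_def by auto

lemma sum_Z7_paths_Suc: "(\<Sum>xs\<in>Z7_paths (Suc n). F xs) = (\<Sum>y<7. \<Sum>zs\<in>Z7_paths n. F (y # zs))"
proof -
  have "(\<Sum>xs\<in>Z7_paths (Suc n). F xs) = (\<Sum>(zs, y)\<in>Z7_paths n \<times> {..<7}. F (y # zs))"
    unfolding Z7_paths_def lists_length_Suc_eq
    by (subst sum.reindex[OF inj_split_Cons]) (simp add: comp_def split_def)
  also have "\<dots> = (\<Sum>y<7. \<Sum>zs\<in>Z7_paths n. F (y # zs))"
    by (simp add: sum.cartesian_product[symmetric] sum.swap[of _ "Z7_paths n"])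
  finally show ?thesis .
qed

definition path_weight :: "(nat \<Rightarrow> real) \<Rightarrow> nat list \<Rightarrow> real" where
  "path_weight g xs = (\<Prod>i<length xs - 1. g ((xs ! (i + 1) + 7 - xs ! i) mod 7))"

lemma path_weight_Cons_Cons:
  "path_weight g (x # y # ys) = g ((y + 7 - x) mod 7) * path_weight g (y # ys)"
  unfolding path_weight_def by (simp del: prod.lessThan_Suc add: prod.lessThan_Suc_shift)

fun label_weight :: "(nat \<Rightarrow> real) \<Rightarrow> (nat \<Rightarrow> bool) \<Rightarrow> nat \<Rightarrow> bool list \<Rightarrow> real" where
  "label_weight g f x [] = 1"
| "label_weight g f x [c] = (if f x = c then 1 else 0)"
| "label_weight g f x (c # d # w) =
     (if f x = c then (\<Sum>y<7. g ((y + 7 - x) mod 7) * label_weight g f y (d # w)) else 0)"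

lemma sum_path_weight_eq_label_weight:
  "(\<Sum>ys\<in>Z7_paths (length w). if map f (x # ys) = c # w then path_weight g (x # ys) else 0)
     = label_weight g f x (c # w)"
proof (induction w arbitrary: x c)
  case Nil
  then show ?case by (simp add: Z7_paths_0 path_weight_def)
next
  case (Cons d w)
  have "(\<Sum>ys\<in>Z7_paths (length (d # w)). if map f (x # ys) = c # d # w then path_weight g (x # ys) else 0)
     = (\<Sum>y<7. \<Sum>zs\<in>Z7_paths (length w).
          if map f (x # y # zs) = c # d # w then path_weight g (x # y # zs) else 0)"
    by (simp add: sum_Z7_paths_Suc)
  also have "\<dots> = (\<Sum>y<7. if f x = c then g ((y + 7 - x) mod 7) *
        (\<Sum>zs\<in>Z7_paths (length w). if map f (y # zs) = d # w then path_weight g (y # zs) else 0)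
        else 0)"
    by (rule sum.cong) (auto simp: path_weight_Cons_Cons sum_distrib_left intro!: sum.cong)
  also have "\<dots> = label_weight g f x (c # d # w)"
    using Cons.IH by (simp add: sum.If_cases)
  finally show ?case .
qed

lemma word_prob_eq_label_weight:
  "word_prob g f (c # w) = (1/7) * (\<Sum>x<7. label_weight g f x (c # w))"
proof -
  have paths: "{xs. length xs = length (c # w) \<and> set xs \<subseteq> {..<7} \<and> map f xs = c # w}
      = {xs \<in> Z7_paths (Suc (length w)). map f xs = c # w}"
    unfolding Z7_paths_def by auto
  have "word_prob g f (c # w)
      = (\<Sum>xs\<in>Z7_paths (Suc (length w)). if map f xs = c # w then (1/7) * path_weight g xs else 0)"
    unfolding word_prob_def paths path_prob_def path_weight_def
    by (auto simp: sum.inter_filter finite_Z7_paths intro!: sum.cong)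
  also have "\<dots> = (\<Sum>x<7. (1/7) * (\<Sum>ys\<in>Z7_paths (length w).
                    if map f (x # ys) = c # w then path_weight g (x # ys) else 0))"
    unfolding sum_Z7_paths_Suc by (simp add: sum_distrib_left if_distrib cong: if_cong)
  also have "\<dots> = (1/7) * (\<Sum>x<7. label_weight g f x (c # w))"
    unfolding sum_path_weight_eq_label_weight by (simp add: sum_distrib_left)
  finally show ?thesis .
qed

definition steps_one_two :: "(nat \<Rightarrow> real) \<Rightarrow> bool" where
  "steps_one_two g \<longleftrightarrow> (\<forall>k<7. k \<noteq> 1 \<longrightarrow> k \<noteq> 2 \<longrightarrow> g k = 0)"

lemma sum_steps_one_two:
  assumes "steps_one_two g" and "x < 7"
  shows "(\<Sum>y<7. g ((y + 7 - x) mod 7) * h y) = g 1 * h ((x + 1) mod 7) + g 2 * h ((x + 2) mod 7)"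
proof -
  have g0: "g 0 = 0" "g 3 = 0" "g 4 = 0" "g 5 = 0" "g 6 = 0"
    using assms(1) unfolding steps_one_two_def by auto
  have sum7: "(\<Sum>y<(7::nat). F y) = F 0 + F 1 + F 2 + F 3 + F 4 + F 5 + (F 6 :: real)" for F
    by (simp add: eval_nat_numeral lessThan_Suc)
  have "x = 0 \<or> x = 1 \<or> x = 2 \<or> x = 3 \<or> x = 4 \<or> x = 5 \<or> x = 6" using assms(2) by auto
  then show ?thesis
    unfolding sum7 by (elim disjE) (simp_all add: g0 numeral_2_eq_2)
qed

text \<open>word_coeffs L x w gives label_weight from x as a polynomial in r = g 1 / g 2 (after
  dividing by g 2 ^ (length w - 1)); L lists the labels of 0, ..., 6.\<close>

fun word_coeffs :: "bool list \<Rightarrow> nat \<Rightarrow> bool list \<Rightarrow> nat list" where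
  "word_coeffs L x [] = [1]"
| "word_coeffs L x [c] = (if L ! x = c then [1] else [])"
| "word_coeffs L x (c # d # w) =
     (if L ! x = c
      then coeffs_plus (0 # word_coeffs L ((x + 1) mod 7) (d # w)) (word_coeffs L ((x + 2) mod 7) (d # w))
      else [])"

definition word_coeffs_total :: "bool list \<Rightarrow> bool list \<Rightarrow> nat list" where
  "word_coeffs_total L w = foldr (\<lambda>x acc. coeffs_plus (word_coeffs L x w) acc) [0..<7] []"

lemma label_weight_eq_coeffs_eval:
  assumes "steps_one_two g" "g 2 > 0" "x < 7"
  shows "label_weight g f x (c # w)
    = g 2 ^ length w * coeffs_eval (word_coeffs (map f [0..<7]) x (c # w)) (g 1 / g 2)"
  using assms(3)
proof (induction w arbitrary: x c)
  case (Cons d w)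
  have "label_weight g f x (c # d # w) = (if f x = c then
      g 1 * label_weight g f ((x + 1) mod 7) (d # w) + g 2 * label_weight g f ((x + 2) mod 7) (d # w)
      else 0)"
    using Cons.prems by (simp add: sum_steps_one_two[OF assms(1)])
  then show ?case
    using Cons.prems assms(2) by (simp add: Cons.IH coeffs_eval_plus field_simps)
qed simp

lemma word_prob_eq_coeffs_eval:
  assumes "steps_one_two g" "g 2 > 0"
  shows "word_prob g f (c # w)
    = (1/7) * g 2 ^ length w * coeffs_eval (word_coeffs_total (map f [0..<7]) (c # w)) (g 1 / g 2)"
  unfolding word_prob_eq_label_weight word_coeffs_total_def coeffs_eval_sum_list
    interv_sum_list_conv_sum_set_nat set_upt atLeast0LessThan
  by (simp add: label_weight_eq_coeffs_eval[OF assms] sum_distrib_left)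

lemma equal_word_probs_imp_not_coeffs_gt:
  assumes "steps_one_two g" "g 1 > 0" "g 2 > 0"
    and "\<And>w. word_prob g f1 w = word_prob g f2 w" and "w \<noteq> []"
  shows "\<not> coeffs_gt (word_coeffs_total (map f1 [0..<7]) w) (word_coeffs_total (map f2 [0..<7]) w)"
proof
  assume gt: "coeffs_gt (word_coeffs_total (map f1 [0..<7]) w) (word_coeffs_total (map f2 [0..<7]) w)"
  obtain c w' where w: "w = c # w'" using \<open>w \<noteq> []\<close> by (cases w) auto
  have "coeffs_eval (word_coeffs_total (map f2 [0..<7]) w) (g 1 / g 2)
      < coeffs_eval (word_coeffs_total (map f1 [0..<7]) w) (g 1 / g 2)"
    using coeffs_eval_strict_mono[OF gt] assms(2,3) by simp
  then have "word_prob g f2 w < word_prob g f1 w"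
    unfolding w word_prob_eq_coeffs_eval[OF assms(1,3)] using assms(3) by simp
  then show False using assms(4)[of w] by simp
qed

section \<open>The necklace computation\<close>

definition test_words :: "bool list list" where
  "test_words = [[False, False], [True, False, True, True, True],
    [True, False, False, True, False, True], [False, True, True]]"

definition signature :: "bool list \<Rightarrow> nat list list" where
  "signature L = map (word_coeffs_total L) test_words"

definition signatures_separated :: "nat list list \<Rightarrow> nat list list \<Rightarrow> bool" where
  "signatures_separated A B \<longleftrightarrow> (\<exists>(p, q)\<in>set (zip A B). coeffs_gt p q \<or> coeffs_gt q p)"

definition is_rotation :: "bool list \<Rightarrow> bool list \<Rightarrow> bool" where
  "is_rotation L M \<longleftrightarrow> (\<exists>l\<in>set [0..<7]. \<forall>k\<in>set [0..<7]. L ! k = M ! ((k + l) mod 7))"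

definition necklaces :: "bool list list" where
  "necklaces = [[False,False,False,False,False,False,False],[False,False,False,False,False,False,True],
    [False,False,False,False,False,True,True],[False,False,False,False,True,False,True],
    [False,False,False,False,True,True,True],[False,False,False,True,False,False,True],
    [False,False,False,True,False,True,True],[False,False,False,True,True,False,True],
    [False,False,False,True,True,True,True],[False,False,True,False,False,True,True],
    [False,False,True,False,True,False,True],[False,False,True,False,True,True,True],
    [False,False,True,True,False,True,True],[False,False,True,True,True,False,True],
    [False,False,True,True,True,True,True],[False,True,False,True,False,True,True],
    [False,True,False,True,True,True,True],[False,True,True,False,True,True,True],
    [False,True,True,True,True,True,True],[True,True,True,True,True,True,True]]"

lemma labelling_rotation_of_necklace:
  "\<forall>L\<in>set (List.n_lists 7 [True, False]). \<exists>i\<in>set [0..<20].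
     is_rotation L (necklaces ! i) \<and> signature L = signature (necklaces ! i)"
  by code_simp

lemma necklace_signatures_separated:
  "\<forall>i\<in>set [0..<20]. \<forall>j\<in>set [0..<20].
     i \<noteq> j \<longrightarrow> signatures_separated (signature (necklaces ! i)) (signature (necklaces ! j))"
  by code_simp

lemma rotations_of_common_labelling:
  fixes l1 l2 :: nat
  assumes "l1 < 7" "\<forall>k<7. f1 k = M ((k + l1) mod 7)"
    and "l2 < 7" "\<forall>k<7. f2 k = M ((k + l2) mod 7)"
  shows "\<exists>l<7. \<forall>k<7. f1 k = f2 ((k + l) mod 7)"
proof (intro exI[of _ "(l1 + 7 - l2) mod 7"] conjI allI impI)
  fix k :: nat assume "k < 7"
  have "((k + (l1 + 7 - l2) mod 7) mod 7 + l2) mod 7 = (k + (l1 + 7 - l2) + l2) mod 7"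
    by (simp add: mod_add_left_eq mod_add_right_eq)
  also have "k + (l1 + 7 - l2) + l2 = (k + l1) + 7" using assms(1,3) by simp
  finally show "f1 k = f2 ((k + (l1 + 7 - l2) mod 7) mod 7)"
    using assms(2,4) \<open>k < 7\<close> by simp
qed simp

lemma reconstructive_steps_one_two:
  assumes g: "steps_one_two g" "g 1 > 0" "g 2 > 0"
  shows "reconstructive g"
  unfolding reconstructive_def
proof (intro allI impI)
  fix f1 f2 :: "nat \<Rightarrow> bool"
  assume eq: "\<forall>w. word_prob g f1 w = word_prob g f2 w"
  define L1 where "L1 = map f1 [0..<7]"
  define L2 where "L2 = map f2 [0..<7]"
  have "L1 \<in> set (List.n_lists 7 [True, False])" "L2 \<in> set (List.n_lists 7 [True, False])"
    unfolding set_n_lists L1_def L2_def by auto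
  then obtain i1 i2 where i1: "i1 < 20" "is_rotation L1 (necklaces ! i1)"
        "signature L1 = signature (necklaces ! i1)"
    and i2: "i2 < 20" "is_rotation L2 (necklaces ! i2)" "signature L2 = signature (necklaces ! i2)"
    using labelling_rotation_of_necklace by (metis atLeastLessThan_iff set_upt)
  have "\<not> signatures_separated (signature L1) (signature L2)"
    using equal_word_probs_imp_not_coeffs_gt[OF g eq[rule_format]]
      equal_word_probs_imp_not_coeffs_gt[OF g eq[rule_format, symmetric]]
    unfolding signatures_separated_def signature_def test_words_def L1_def L2_def by simp
  then have "i1 = i2"
    using necklace_signatures_separated i1(1,3) i2(1,3) by (metis atLeastLessThan_iff le0 set_upt)
  then obtain l1 l2 where "l1 < 7" "\<forall>k<7. f1 k = necklaces ! i1 ! ((k + l1) mod 7)"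
    and "l2 < 7" "\<forall>k<7. f2 k = necklaces ! i1 ! ((k + l2) mod 7)"
    using i1(2) i2(2) unfolding is_rotation_def L1_def L2_def by auto
  then show "\<exists>l<7. \<forall>k<7. f1 k = f2 ((k + l) mod 7)"
    by (rule rotations_of_common_labelling[where M = "(!) (necklaces ! i1)"])
qed

definition gamma :: "nat \<Rightarrow> real" where
  "gamma k = (if k = 1 then sin (2 * pi / 7) else if k = 2 then sin (pi / 7) else 0)
              / (sin (pi / 7) + sin (2 * pi / 7))"

lemma sin_pi_sevenths_pos: "sin (pi / 7) > 0" "sin (2 * pi / 7) > 0"
  by (auto intro!: sin_gt_zero)

lemma gamma_pos: "gamma 1 > 0" "gamma 2 > 0"
  using sin_pi_sevenths_pos by (simp_all add: gamma_def)

lemma steps_one_two_gamma: "steps_one_two gamma"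
  unfolding steps_one_two_def gamma_def by simp

lemma is_distribution_gamma: "is_distribution_Z7 gamma"
  using sin_pi_sevenths_pos unfolding is_distribution_Z7_def gamma_def
  by (simp add: numeral_eq_Suc lessThan_Suc add_pos_pos divide_simps)

lemma omega7_powi: "omega7 powi n = cis (of_int n * (- 2 * pi / 7))"
proof -
  have "omega7 = cis (- 2 * pi / 7)"
    unfolding omega7_def cis_conv_exp by (simp add: algebra_simps)
  then have "omega7 powi n = cis (- 2 * pi / 7) powi n" by simp
  also have "\<dots> = cis (of_int n * (- 2 * pi / 7))" by (rule cis_power_int)
  finally show ?thesis .
qed

lemma fhat_gamma_symmetric: "fhat gamma 3 = fhat gamma (-3)"
proof -
  have plus: "fhat gamma 3 = cis (-6 * pi / 7) * gamma 1 + cis (-12 * pi / 7) * gamma 2"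
    unfolding fhat_def by (simp add: numeral_eq_Suc lessThan_Suc omega7_powi gamma_def)
  have minus: "fhat gamma (-3) = cis (6 * pi / 7) * gamma 1 + cis (12 * pi / 7) * gamma 2"
    unfolding fhat_def by (simp add: numeral_eq_Suc lessThan_Suc omega7_powi gamma_def)
  have "sin (6 * pi / 7) = sin (pi / 7)"
    using sin_pi_minus[of "pi / 7"] by (simp add: field_simps)
  moreover have "sin (12 * pi / 7) = - sin (2 * pi / 7)"
    using sin_2pi_minus[of "2 * pi / 7"] by (simp add: field_simps)
  moreover have "gamma 1 * sin (pi / 7) = gamma 2 * sin (2 * pi / 7)"
    by (simp add: gamma_def)
  ultimately show ?thesis
    unfolding plus minus by (simp add: complex_eq_iff)
qed

theorem theorem6:
  shows "\<exists>g. is_distribution_Z7 g \<and> fhat g 3 = fhat g (-3) \<and> reconstructive g"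
  using is_distribution_gamma fhat_gamma_symmetric
    reconstructive_steps_one_two[OF steps_one_two_gamma gamma_pos] by blast

end
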